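(* Let $c\ge 1$. There exists a constant $A=A(c)\in(0,\infty)$ (depending only on $c$, in particular independent of $N$) such that the following holds for every $N$. Let $V_N=\{0,\ldots,N\}$ and let $\mathcal Q_N$ be the set of all birth and death Markov kernels $Q$ on $V_N$ with $Q(x,y)\in[1/4,3/4]$ whenever $|x-y|\le 1$, and whose reversible probability measure $\pi$ satisfies $1/4\le (N+1)\pi(x)\le 4$ for all $x\in V_N$. Let $(K_i)_{i\ge1}$ be a sequence with $K_i\in\mathcal Q_N$ for all $i$, and assume that $(K_i)_{i\ge1}$ is $c$-stable with respect to the uniform probability measure on $V_N$. Then for every $\varepsilon\in(0,1)$ the relative-sup merging time of $(K_i)_{i\ge1}$ satisfies \[T_\infty(\varepsilon)\le A N^2\bigl(1+\log_+ (1/\varepsilon)\bigr).\]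
   Context: A Markov kernel $K$ on a finite set $V$ satisfies $K(x,y)\ge0$ and $\sum_y K(x,y)=1$. For a sequence $(K_i)_{i\ge1}$ of Markov kernels, $K_{n,m}=K_{n+1}K_{n+2}\cdots K_m$ (matrix product) for $m\ge n$, with $K_{n,n}=I$. A birth and death kernel on $\{0,\ldots,N\}$ is one with $Q(x,y)=0$ whenever $|x-y|>1$. The sequence $(K_i)$ is $c$-stable with respect to a probability measure $\mu_0$ if, setting $\mu_n=\mu_0K_{0,n}$, one has $c^{-1}\le \mu_n(x)/\mu_0(x)\le c$ for all $n\ge0$ and $x\in V$. The relative-sup merging time is $T_\infty(\varepsilon)=\inf\{n: \max_{x,y,z\in V}|K_{0,n}(x,z)/K_{0,n}(y,z)-1|<\varepsilon\}$, with the conventions $0/0=1$ and $a/0=\infty$ for $a>0$. $\log_+ t=\max(\log t,0)$. *)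

theory Defs
  imports Complex_Main "HOL-Library.Extended_Nat"
begin

text \<open>Kernels on V_N = {0..N} are represented as functions nat => nat => real;
  only the values on {0..N} x {0..N} are relevant.\<close>

definition markov_kernel :: "nat \<Rightarrow> (nat \<Rightarrow> nat \<Rightarrow> real) \<Rightarrow> bool" where
  "markov_kernel N K \<longleftrightarrow>
     (\<forall>x\<in>{0..N}. \<forall>y\<in>{0..N}. K x y \<ge> 0) \<and> (\<forall>x\<in>{0..N}. (\<Sum>y\<in>{0..N}. K x y) = 1)"

definition birth_death :: "nat \<Rightarrow> (nat \<Rightarrow> nat \<Rightarrow> real) \<Rightarrow> bool" where
  "birth_death N Q \<longleftrightarrow> markov_kernel N Q \<and>
     (\<forall>x\<in>{0..N}. \<forall>y\<in>{0..N}. \<bar>int x - int y\<bar> > 1 \<longrightarrow> Q x y = 0)"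

definition prob_measure_on :: "nat \<Rightarrow> (nat \<Rightarrow> real) \<Rightarrow> bool" where
  "prob_measure_on N p \<longleftrightarrow> (\<forall>x\<in>{0..N}. p x \<ge> 0) \<and> (\<Sum>x\<in>{0..N}. p x) = 1"

definition reversible :: "nat \<Rightarrow> (nat \<Rightarrow> nat \<Rightarrow> real) \<Rightarrow> (nat \<Rightarrow> real) \<Rightarrow> bool" where
  "reversible N Q p \<longleftrightarrow> (\<forall>x\<in>{0..N}. \<forall>y\<in>{0..N}. p x * Q x y = p y * Q y x)"

text \<open>The class Q_N. Such a kernel is irreducible, so its reversible probability
  measure is unique; we require that it exists and satisfies the bounds.\<close>
definition QN :: "nat \<Rightarrow> (nat \<Rightarrow> nat \<Rightarrow> real) set" where
  "QN N = {Q. birth_death N Q \<and>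
     (\<forall>x\<in>{0..N}. \<forall>y\<in>{0..N}. \<bar>int x - int y\<bar> \<le> 1 \<longrightarrow> Q x y \<in> {1/4..3/4}) \<and>
     (\<exists>p. prob_measure_on N p \<and> reversible N Q p \<and>
          (\<forall>x\<in>{0..N}. 1/4 \<le> real (N+1) * p x \<and> real (N+1) * p x \<le> 4))}"

definition kmul :: "nat \<Rightarrow> (nat \<Rightarrow> nat \<Rightarrow> real) \<Rightarrow> (nat \<Rightarrow> nat \<Rightarrow> real) \<Rightarrow> (nat \<Rightarrow> nat \<Rightarrow> real)" where
  "kmul N P Q = (\<lambda>x y. \<Sum>z\<in>{0..N}. P x z * Q z y)"

text \<open>kprod N K n = K_{0,n} = K_1 K_2 ... K_n (K 0 is unused).\<close>
fun kprod :: "nat \<Rightarrow> (nat \<Rightarrow> nat \<Rightarrow> nat \<Rightarrow> real) \<Rightarrow> nat \<Rightarrow> (nat \<Rightarrow> nat \<Rightarrow> real)" where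
  "kprod N K 0 = (\<lambda>x y. if x = y then 1 else 0)"
| "kprod N K (Suc n) = kmul N (kprod N K n) (K (Suc n))"

definition uniform :: "nat \<Rightarrow> nat \<Rightarrow> real" where
  "uniform N x = 1 / real (N+1)"

definition c_stable :: "nat \<Rightarrow> real \<Rightarrow> (nat \<Rightarrow> nat \<Rightarrow> nat \<Rightarrow> real) \<Rightarrow> (nat \<Rightarrow> real) \<Rightarrow> bool" where
  "c_stable N c K mu0 \<longleftrightarrow> (\<forall>n. \<forall>x\<in>{0..N}.
     let mun = (\<Sum>y\<in>{0..N}. mu0 y * kprod N K n y x) in
       1/c \<le> mun / mu0 x \<and> mun / mu0 x \<le> c)"

text \<open>|a/b - 1| < eps with conventions 0/0 = 1 and a/0 = infinity for a > 0.\<close>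
definition ratio_close :: "real \<Rightarrow> real \<Rightarrow> real \<Rightarrow> bool" where
  "ratio_close a b eps \<longleftrightarrow> (if b = 0 then (if a = 0 then 0 < eps else False)
                            else \<bar>a / b - 1\<bar> < eps)"

definition merged :: "nat \<Rightarrow> (nat \<Rightarrow> nat \<Rightarrow> nat \<Rightarrow> real) \<Rightarrow> real \<Rightarrow> nat \<Rightarrow> bool" where
  "merged N K eps n \<longleftrightarrow> (\<forall>x\<in>{0..N}. \<forall>y\<in>{0..N}. \<forall>z\<in>{0..N}.
      ratio_close (kprod N K n x z) (kprod N K n y z) eps)"

text \<open>Relative-sup merging time, infinite if the set is empty.\<close>
definition T_inf :: "nat \<Rightarrow> (nat \<Rightarrow> nat \<Rightarrow> nat \<Rightarrow> real) \<Rightarrow> real \<Rightarrow> enat" where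
  "T_inf N K eps = Inf {enat n | n. merged N K eps n}"

definition log_plus :: "real \<Rightarrow> real" where
  "log_plus t = max (ln t) 0"

end

theory Submission
  imports Defs "HOL-Analysis.Convex"
begin

text \<open>Let \<open>\<mu>_k = u K_{0,k}\<close> with \<open>u\<close> uniform; stability keeps \<open>\<mu>_k\<close> within a factor \<open>c\<close>
  of \<open>u\<close>. For fixed \<open>x\<close> the density \<open>K_{0,k}(x,-) / \<mu>_k\<close> evolves by the time reversal of
  \<open>K_{k+1}\<close> with respect to \<open>\<mu>\<close>, and for fixed \<open>z\<close> the function \<open>K_{n-j,n}(-,z) / \<mu>_n(z)\<close>
  evolves by \<open>K_{n-j}\<close>. Both are Markov steps with holding and neighbour probabilities bounded
  below, so each step lowers the \<open>\<mu>\<close>-variance \<open>v\<close> of the density by at least \<open>\<kappa> E\<close>, where \<open>E\<close>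
  is the energy along the path and \<open>\<kappa> \<sim> 1 / (c\<^sup>3 N)\<close>. A mean-one density on \<open>{0..N}\<close>
  satisfies \<open>v \<le> N E\<close> and \<open>v\<^sup>2 \<le> 4 N E\<close>, so \<open>v' \<le> v - v\<^sup>2/D\<close> and \<open>v' \<le> (1 - 1/D) v\<close> with
  \<open>D \<sim> c\<^sup>3 N\<^sup>2\<close>; after \<open>L \<sim> D (1 + log (1/\<epsilon>))\<close> steps both variances are at most \<open>\<epsilon>/4\<close>.
  Finally \<open>K_{0,2L}(x,z) / \<mu>_{2L}(z) - 1\<close> is the \<open>\<mu>_L\<close>-covariance of the two densities at time
  \<open>L\<close>, hence at most \<open>\<epsilon>/4\<close> in absolute value, and all ratios \<open>K_{0,2L}(x,z) / K_{0,2L}(y,z)\<close>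
  are within \<open>\<epsilon>\<close> of 1.\<close>

section \<open>Variance inequalities\<close>

lemma weighted_variance_identity:
  fixes p f :: "'a \<Rightarrow> real"
  assumes "finite I" "sum p I = 1"
  shows "(\<Sum>i\<in>I. \<Sum>j\<in>I. p i * p j * (f i - f j)^2)
       = 2 * (\<Sum>i\<in>I. p i * (f i)^2) - 2 * (\<Sum>i\<in>I. p i * f i)^2"
proof -
  have expand: "p i * p j * (f i - f j)^2
      = p j * (p i * (f i)^2) + p i * (p j * (f j)^2) - 2 * ((p i * f i) * (p j * f j))" for i j
    by (simp add: power2_eq_square algebra_simps)
  have "(\<Sum>i\<in>I. \<Sum>j\<in>I. p i * p j * (f i - f j)^2)
     = (\<Sum>i\<in>I. \<Sum>j\<in>I. p j * (p i * (f i)^2)) + (\<Sum>i\<in>I. \<Sum>j\<in>I. p i * (p j * (f j)^2))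
       - 2 * (\<Sum>i\<in>I. \<Sum>j\<in>I. (p i * f i) * (p j * f j))"
    unfolding expand by (simp add: sum_subtractf sum.distrib sum_distrib_left)
  also have "(\<Sum>i\<in>I. \<Sum>j\<in>I. p j * (p i * (f i)^2)) = (\<Sum>i\<in>I. p i * (f i)^2)"
    by (simp add: sum_distrib_right[symmetric] assms)
  also have "(\<Sum>i\<in>I. \<Sum>j\<in>I. p i * (p j * (f j)^2)) = (\<Sum>i\<in>I. p i * (f i)^2)"
    by (simp add: sum_distrib_left[symmetric] sum_distrib_right[symmetric] assms)
  also have "(\<Sum>i\<in>I. \<Sum>j\<in>I. (p i * f i) * (p j * f j)) = (\<Sum>i\<in>I. p i * f i)^2"
    by (simp add: power2_eq_square sum_product)
  finally show ?thesis by simp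
qed

lemma weighted_mean_sq_le:
  fixes p f :: "'a \<Rightarrow> real"
  assumes "finite I" "sum p I = 1" "\<And>i. i \<in> I \<Longrightarrow> p i \<ge> 0"
  shows "(\<Sum>i\<in>I. p i * f i)^2 \<le> (\<Sum>i\<in>I. p i * (f i)^2)"
proof -
  have "0 \<le> (\<Sum>i\<in>I. \<Sum>j\<in>I. p i * p j * (f i - f j)^2)"
    by (intro sum_nonneg) (simp add: assms(3))
  then show ?thesis using weighted_variance_identity[OF assms(1,2), of f] by simp
qed

lemma weighted_mean_sq_pair_gap:
  fixes p f :: "'a \<Rightarrow> real"
  assumes "finite I" "sum p I = 1" "\<And>i. i \<in> I \<Longrightarrow> p i \<ge> 0" "a \<in> I" "b \<in> I" "a \<noteq> b"
  shows "(\<Sum>i\<in>I. p i * f i)^2 + p a * p b * (f a - f b)^2 \<le> (\<Sum>i\<in>I. p i * (f i)^2)"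
proof -
  define T where "T i j = p i * p j * (f i - f j)^2" for i j
  have T_nonneg: "i \<in> I \<Longrightarrow> j \<in> I \<Longrightarrow> T i j \<ge> 0" for i j
    using assms(3) unfolding T_def by simp
  have "T a b \<le> (\<Sum>j\<in>I. T a j)" "T b a \<le> (\<Sum>j\<in>I. T b j)"
    by (rule member_le_sum; use assms T_nonneg in auto)+
  moreover have "(\<Sum>i\<in>{a,b}. \<Sum>j\<in>I. T i j) \<le> (\<Sum>i\<in>I. \<Sum>j\<in>I. T i j)"
    by (rule sum_mono2) (use assms T_nonneg in \<open>auto intro: sum_nonneg\<close>)
  moreover have "T b a = T a b" unfolding T_def by (simp add: power2_commute)
  ultimately have "2 * T a b \<le> (\<Sum>i\<in>I. \<Sum>j\<in>I. T i j)" using assms(6) by simp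
  then show ?thesis using weighted_variance_identity[OF assms(1,2), of f] unfolding T_def by simp
qed

definition sq_norm :: "nat \<Rightarrow> (nat \<Rightarrow> real) \<Rightarrow> (nat \<Rightarrow> real) \<Rightarrow> real" where
  "sq_norm N \<nu> f = (\<Sum>w\<in>{0..N}. \<nu> w * (f w)^2)"

lemma sq_norm_cong:
  "(\<And>w. w \<le> N \<Longrightarrow> \<nu> w = \<nu>' w) \<Longrightarrow> (\<And>w. w \<le> N \<Longrightarrow> f w = f' w) \<Longrightarrow> sq_norm N \<nu> f = sq_norm N \<nu>' f'"
  unfolding sq_norm_def by (rule sum.cong) auto

definition path_energy :: "nat \<Rightarrow> (nat \<Rightarrow> real) \<Rightarrow> real" where
  "path_energy N f = (\<Sum>v<N. (f (Suc v) - f v)^2)"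

lemma markov_row_sq_gap:
  assumes P: "markov_kernel N P" and w: "w \<le> N"
  shows "(\<Sum>w'\<in>{0..N}. P w w' * f w')^2
           + (if w < N then P w w * P w (Suc w) * (f w - f (Suc w))^2 else 0)
         \<le> (\<Sum>w'\<in>{0..N}. P w w' * (f w')^2)"
proof -
  have row: "sum (P w) {0..N} = 1" "\<And>w'. w' \<in> {0..N} \<Longrightarrow> P w w' \<ge> 0"
    using P w unfolding markov_kernel_def by auto
  show ?thesis
  proof (cases "w < N")
    case True
    then show ?thesis using weighted_mean_sq_pair_gap[of "{0..N}" "P w" w "Suc w" f] row by simp
  next
    case False
    then show ?thesis using weighted_mean_sq_le[of "{0..N}" "P w" f] row by simp
  qed
qed

lemma markov_step_sq_norm_gap:
  fixes \<rho> f :: "nat \<Rightarrow> real"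
  assumes P: "markov_kernel N P"
    and \<rho>: "\<And>w. w \<le> N \<Longrightarrow> \<rho> w \<ge> 0"
    and \<kappa>: "\<And>v. v < N \<Longrightarrow> \<kappa> \<le> \<rho> v * P v v * P v (Suc v)"
  shows "sq_norm N \<rho> (\<lambda>w. \<Sum>w'\<in>{0..N}. P w w' * f w') + \<kappa> * path_energy N f
         \<le> sq_norm N (\<lambda>w'. \<Sum>w\<in>{0..N}. \<rho> w * P w w') f"
proof -
  define gap where "gap w = (if w < N then P w w * P w (Suc w) * (f w - f (Suc w))^2 else 0)" for w
  have "\<kappa> * path_energy N f \<le> (\<Sum>w<N. \<rho> w * gap w)"
    unfolding path_energy_def sum_distrib_left
  proof (rule sum_mono)
    fix v assume "v \<in> {..<N}"
    then have "\<kappa> * (f (Suc v) - f v)^2 \<le> (\<rho> v * P v v * P v (Suc v)) * (f v - f (Suc v))^2"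
      using \<kappa> by (auto simp: power2_commute intro!: mult_right_mono)
    then show "\<kappa> * (f (Suc v) - f v)^2 \<le> \<rho> v * gap v"
      using \<open>v \<in> {..<N}\<close> by (simp add: gap_def mult.assoc)
  qed
  also have "\<dots> = (\<Sum>w\<in>{0..N}. \<rho> w * gap w)"
    by (rule sum.mono_neutral_left) (auto simp: gap_def)
  finally have "sq_norm N \<rho> (\<lambda>w. \<Sum>w'\<in>{0..N}. P w w' * f w') + \<kappa> * path_energy N f
      \<le> (\<Sum>w\<in>{0..N}. \<rho> w * ((\<Sum>w'\<in>{0..N}. P w w' * f w')^2 + gap w))"
    by (simp add: sq_norm_def sum.distrib distrib_left)
  also have "\<dots> \<le> (\<Sum>w\<in>{0..N}. \<rho> w * (\<Sum>w'\<in>{0..N}. P w w' * (f w')^2))"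
    by (intro sum_mono mult_left_mono) (use markov_row_sq_gap[OF P] \<rho> in \<open>auto simp: gap_def\<close>)
  also have "\<dots> = (\<Sum>w'\<in>{0..N}. \<Sum>w\<in>{0..N}. \<rho> w * P w w' * (f w')^2)"
    by (subst sum.swap) (simp add: sum_distrib_left mult.assoc)
  also have "\<dots> = sq_norm N (\<lambda>w'. \<Sum>w\<in>{0..N}. \<rho> w * P w w') f"
    by (simp add: sq_norm_def sum_distrib_right)
  finally show ?thesis .
qed

definition total_variation :: "nat \<Rightarrow> (nat \<Rightarrow> real) \<Rightarrow> real" where
  "total_variation N f = (\<Sum>v<N. \<bar>f (Suc v) - f v\<bar>)"

lemma total_variation_nonneg: "total_variation N f \<ge> 0"
  unfolding total_variation_def by (simp add: sum_nonneg)

lemma total_variation_sq_le: "(total_variation N f)^2 \<le> real N * path_energy N f"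
proof -
  have "(total_variation N f)^2 \<le> (\<Sum>v<N. \<bar>f (Suc v) - f v\<bar>^2) * card {..<N}"
    unfolding total_variation_def by (rule sum_squared_le_sum_of_squares)
  then show ?thesis unfolding path_energy_def by (simp add: mult.commute)
qed

lemma dist_le_total_variation:
  fixes f :: "nat \<Rightarrow> real"
  assumes "a \<le> N" "b \<le> N"
  shows "\<bar>f b - f a\<bar> \<le> total_variation N f"
proof -
  have ordered: "\<bar>f y - f x\<bar> \<le> total_variation N f" if "x \<le> y" "y \<le> N" for x y
  proof -
    have "\<bar>f y - f x\<bar> = \<bar>\<Sum>v\<in>{x..<y}. f (Suc v) - f v\<bar>"
      using sum_Suc_diff'[OF \<open>x \<le> y\<close>, where f = f] by simp
    also have "\<dots> \<le> (\<Sum>v\<in>{x..<y}. \<bar>f (Suc v) - f v\<bar>)" by (rule sum_abs)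
    also have "\<dots> \<le> total_variation N f"
      unfolding total_variation_def by (rule sum_mono2) (use that in auto)
    finally show ?thesis .
  qed
  show ?thesis
    using ordered[of a b] ordered[of b a] assms by (cases "a \<le> b") (auto simp: abs_minus_commute)
qed

lemma sq_norm_minus_one:
  assumes "prob_measure_on N \<nu>" "(\<Sum>w\<in>{0..N}. \<nu> w * f w) = 1"
  shows "sq_norm N \<nu> f - 1 = (\<Sum>w\<in>{0..N}. \<nu> w * (f w - 1)^2)"
proof -
  have "(\<Sum>w\<in>{0..N}. \<nu> w * (f w - 1)^2) = (\<Sum>w\<in>{0..N}. \<nu> w * (f w)^2 - 2 * (\<nu> w * f w) + \<nu> w)"
    by (rule sum.cong) (auto simp: power2_eq_square algebra_simps)
  also have "\<dots> = sq_norm N \<nu> f - 1"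
    using assms by (simp add: sq_norm_def prob_measure_on_def sum.distrib sum_subtractf sum_distrib_left[symmetric])
  finally show ?thesis by simp
qed

text \<open>A density of mean one takes values on both sides of 1.\<close>
lemma mean_one_deviation_le_total_variation:
  assumes \<nu>: "prob_measure_on N \<nu>" and mean: "(\<Sum>w\<in>{0..N}. \<nu> w * f w) = 1" and w: "w \<le> N"
  shows "\<bar>f w - 1\<bar> \<le> total_variation N f"
proof -
  have fin: "finite (f ` {0..N})" "f ` {0..N} \<noteq> {}" by auto
  obtain w0 where w0: "w0 \<le> N" "f w0 = Min (f ` {0..N})"
    using Min_in[OF fin] unfolding image_iff by (metis atLeastAtMost_iff)
  obtain w1 where w1: "w1 \<le> N" "f w1 = Max (f ` {0..N})"
    using Max_in[OF fin] unfolding image_iff by (metis atLeastAtMost_iff)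
  have "(\<Sum>w\<in>{0..N}. \<nu> w * f w0) \<le> 1" "1 \<le> (\<Sum>w\<in>{0..N}. \<nu> w * f w1)"
    unfolding mean[symmetric] by (intro sum_mono mult_left_mono; use w0 w1 \<nu> in \<open>auto simp: prob_measure_on_def\<close>)+
  then have "f w0 \<le> 1" "1 \<le> f w1"
    using \<nu> by (simp_all add: prob_measure_on_def sum_distrib_right[symmetric])
  moreover have "\<bar>f w - f w0\<bar> \<le> total_variation N f" "\<bar>f w1 - f w\<bar> \<le> total_variation N f"
    by (rule dist_le_total_variation; use w w0 w1 in simp)+
  ultimately show ?thesis by linarith
qed

lemma variance_le_total_variation:
  assumes \<nu>: "prob_measure_on N \<nu>"
    and f_nonneg: "\<And>w. w \<le> N \<Longrightarrow> f w \<ge> 0"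
    and mean: "(\<Sum>w\<in>{0..N}. \<nu> w * f w) = 1"
  shows "0 \<le> sq_norm N \<nu> f - 1" "sq_norm N \<nu> f - 1 \<le> (total_variation N f)^2"
    "sq_norm N \<nu> f - 1 \<le> 2 * total_variation N f"
proof -
  define s where "s = total_variation N f"
  have dev: "\<bar>f w - 1\<bar> \<le> s" if "w \<in> {0..N}" for w
    unfolding s_def using mean_one_deviation_le_total_variation[OF \<nu> mean] that by simp
  have \<nu>_nonneg: "w \<in> {0..N} \<Longrightarrow> \<nu> w \<ge> 0" for w
    using \<nu> unfolding prob_measure_on_def by simp
  note var_eq = sq_norm_minus_one[OF \<nu> mean]
  show "0 \<le> sq_norm N \<nu> f - 1"
    unfolding var_eq by (intro sum_nonneg mult_nonneg_nonneg) (auto simp: \<nu>_nonneg)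
  have "(f w - 1)^2 \<le> s^2" if "w \<in> {0..N}" for w
    using dev[OF that] by (metis abs_ge_zero power2_abs power_mono)
  then have "sq_norm N \<nu> f - 1 \<le> (\<Sum>w\<in>{0..N}. \<nu> w * s^2)"
    unfolding var_eq by (intro sum_mono mult_left_mono) (auto simp: \<nu>_nonneg)
  also have "\<dots> = s^2" using \<nu> by (simp add: prob_measure_on_def sum_distrib_right[symmetric])
  finally show "sq_norm N \<nu> f - 1 \<le> (total_variation N f)^2" unfolding s_def .
  have "sq_norm N \<nu> f - 1 \<le> (\<Sum>w\<in>{0..N}. s * (\<nu> w * f w + \<nu> w))"
    unfolding var_eq
  proof (rule sum_mono)
    fix w assume w: "w \<in> {0..N}"
    have "(f w - 1)^2 = \<bar>f w - 1\<bar> * \<bar>f w - 1\<bar>" by (simp add: power2_eq_square)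
    also have "\<dots> \<le> s * (f w + 1)"
      using dev[OF w] f_nonneg[of w] w total_variation_nonneg[of N f] unfolding s_def
      by (intro mult_mono) auto
    finally show "\<nu> w * (f w - 1)^2 \<le> s * (\<nu> w * f w + \<nu> w)"
      using mult_left_mono[OF _ \<nu>_nonneg[OF w], of "(f w - 1)^2" "s * (f w + 1)"]
      by (simp add: algebra_simps)
  qed
  also have "\<dots> = 2 * s"
    using mean \<nu> by (simp add: prob_measure_on_def sum_distrib_left[symmetric] sum.distrib)
  finally show "sq_norm N \<nu> f - 1 \<le> 2 * total_variation N f" unfolding s_def .
qed

text \<open>The quadratic bound is the Nash-type inequality responsible for the \<open>N\<^sup>2\<close> time scale.\<close>
lemma variance_le_path_energy:
  fixes \<nu> f :: "nat \<Rightarrow> real"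
  assumes "prob_measure_on N \<nu>" "\<And>w. w \<le> N \<Longrightarrow> f w \<ge> 0" "(\<Sum>w\<in>{0..N}. \<nu> w * f w) = 1"
  shows "0 \<le> sq_norm N \<nu> f - 1" "sq_norm N \<nu> f - 1 \<le> real N * path_energy N f"
    "(sq_norm N \<nu> f - 1)^2 \<le> 4 * real N * path_energy N f"
proof -
  note var = variance_le_total_variation[OF assms]
  show "0 \<le> sq_norm N \<nu> f - 1" using var(1) .
  show "sq_norm N \<nu> f - 1 \<le> real N * path_energy N f"
    using var(2) total_variation_sq_le[of N f] by linarith
  have "(sq_norm N \<nu> f - 1)^2 \<le> (2 * total_variation N f)^2"
    using var(1,3) by (intro power_mono) auto
  then show "(sq_norm N \<nu> f - 1)^2 \<le> 4 * real N * path_energy N f"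
    using total_variation_sq_le[of N f] by (simp add: power_mult_distrib)
qed

lemma harmonic_decay_of_quadratic_recursion:
  fixes v :: "nat \<Rightarrow> real"
  assumes D: "D > 0"
    and step: "\<And>k. k < M \<Longrightarrow> 0 \<le> v k \<and> v (Suc k) \<le> v k - (v k)^2 / D"
  shows "1 \<le> k \<Longrightarrow> k \<le> M \<Longrightarrow> v k \<le> D / real k"
proof (induction k)
  case 0 then show ?case by simp
next
  case (Suc k)
  have hk: "0 \<le> v k" "v (Suc k) \<le> v k * (1 - v k / D)"
    using step[of k] Suc.prems D by (auto simp: power2_eq_square field_simps)
  show ?case
  proof (cases "k = 0")
    case True
    have "D * (v k * (1 - v k / D)) = D * D - ((v k - D/2)^2 + 3/4 * D^2)"
      using D by (simp add: power2_eq_square field_simps)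
    also have "\<dots> \<le> D * D" using zero_le_power2[of "v k - D/2"] zero_le_power2[of D] by linarith
    finally have "v k * (1 - v k / D) \<le> D" using D by simp
    then show ?thesis using True hk by simp
  next
    case False
    have IH: "v k \<le> D / real k" using Suc False by simp
    show ?thesis
    proof (cases "v k \<le> D / real (Suc k)")
      case True
      have "0 \<le> v k * (v k / D)" using hk D by simp
      then have "v k * (1 - v k / D) \<le> v k" by (simp add: right_diff_distrib)
      then show ?thesis using True hk by linarith
    next
      case big: False
      have "1 - v k / D \<le> real k / real (Suc k)" using big D by (simp add: field_simps)
      then have "v (Suc k) \<le> v k * (real k / real (Suc k))"
        using hk mult_left_mono[of "1 - v k / D" "real k / real (Suc k)" "v k"] by linarith
      also have "\<dots> \<le> (D / real k) * (real k / real (Suc k))"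
        by (rule mult_right_mono) (use IH in auto)
      also have "\<dots> = D / real (Suc k)" using False by simp
      finally show ?thesis .
    qed
  qed
qed

lemma geometric_decay_of_linear_recursion:
  fixes v :: "nat \<Rightarrow> real"
  assumes q: "q \<ge> 0" and step: "\<And>k. k < M \<Longrightarrow> v (Suc k) \<le> q * v k"
  shows "k + i \<le> M \<Longrightarrow> v (k + i) \<le> q ^ i * v k"
proof (induction i)
  case 0 then show ?case by simp
next
  case (Suc i)
  have "v (k + Suc i) \<le> q * v (k + i)" using step[of "k + i"] Suc.prems by simp
  also have "\<dots> \<le> q * (q ^ i * v k)" using Suc q by (intro mult_left_mono) auto
  finally show ?case by (simp add: mult.assoc)
qed

text \<open>The quadratic recursion brings \<open>v\<close> below 1 after \<open>D\<close> steps, the linear one then gains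
  a factor \<open>e\<close> every further \<open>D\<close> steps.\<close>
lemma exp_decay_of_recursion:
  fixes v :: "nat \<Rightarrow> real"
  assumes D: "D \<ge> 1"
    and step: "\<And>k. k < M \<Longrightarrow> 0 \<le> v k \<and> v (Suc k) \<le> v k - (v k)^2 / D \<and> v (Suc k) \<le> (1 - 1/D) * v k"
    and k: "1 \<le> k" "D \<le> real k" and i: "D * t \<le> real i" and M: "k + i \<le> M"
  shows "v (k + i) \<le> exp (- t)"
proof -
  have "v k \<le> D / real k"
    using harmonic_decay_of_quadratic_recursion[of D M v k] step D k M by auto
  also have "\<dots> \<le> 1" using k D by simp
  finally have vk: "v k \<le> 1" .
  have q: "0 \<le> 1 - 1/D" using D by simp
  have "v (k + i) \<le> (1 - 1/D) ^ i * v k"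
    using geometric_decay_of_linear_recursion[OF q, of M v k i] step M by auto
  also have "\<dots> \<le> exp (- 1/D) ^ i"
  proof -
    have "1 - 1/D \<le> exp (- 1/D)" using exp_ge_add_one_self[of "- 1/D"] by simp
    then have "(1 - 1/D) ^ i \<le> exp (- 1/D) ^ i" using q by (simp add: power_mono)
    moreover have "(1 - 1/D) ^ i * v k \<le> (1 - 1/D) ^ i"
      using vk q by (simp add: mult_left_le)
    ultimately show ?thesis by linarith
  qed
  also have "\<dots> = exp (- (real i / D))" by (simp flip: exp_of_nat_mult)
  also have "\<dots> \<le> exp (- t)" using i D by (simp add: field_simps)
  finally show ?thesis .
qed

lemma sq_norm_decay:
  fixes \<nu> F :: "nat \<Rightarrow> nat \<Rightarrow> real"
  assumes \<kappa>: "\<kappa> > 0"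
    and \<nu>: "\<And>k. k \<le> M \<Longrightarrow> prob_measure_on N (\<nu> k)"
    and F_nonneg: "\<And>k w. k \<le> M \<Longrightarrow> w \<le> N \<Longrightarrow> F k w \<ge> 0"
    and mean: "\<And>k. k \<le> M \<Longrightarrow> (\<Sum>w\<in>{0..N}. \<nu> k w * F k w) = 1"
    and step: "\<And>k. k < M \<Longrightarrow>
      sq_norm N (\<nu> (Suc k)) (F (Suc k)) + \<kappa> * path_energy N (F k) \<le> sq_norm N (\<nu> k) (F k)"
    and D: "D = 4 * real N / \<kappa>" "D \<ge> 1"
    and k: "1 \<le> k" "D \<le> real k" and i: "D * t \<le> real i" and M: "k + i = M"
  shows "sq_norm N (\<nu> M) (F M) - 1 \<le> exp (- t)"
proof -
  define v where "v k = sq_norm N (\<nu> k) (F k) - 1" for k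
  have N: "real N > 0" using D \<kappa> by (cases "N = 0") auto
  have recursion: "0 \<le> v k \<and> v (Suc k) \<le> v k - (v k)^2 / D \<and> v (Suc k) \<le> (1 - 1/D) * v k"
    if "k < M" for k
  proof -
    define E where "E = path_energy N (F k)"
    have "0 \<le> v k" "v k \<le> real N * E" "(v k)^2 \<le> 4 * real N * E"
      unfolding v_def E_def
      by (rule variance_le_path_energy; use \<nu> F_nonneg mean that in auto)+
    moreover have "v (Suc k) + \<kappa> * E \<le> v k" using step[OF that] unfolding v_def E_def by simp
    moreover have "(v k)^2 / D \<le> \<kappa> * E" "v k / D \<le> \<kappa> * E"
      using calculation N \<kappa> unfolding D(1) by (simp_all add: field_simps)
    ultimately show ?thesis by (simp add: algebra_simps)
  qed
  have "v (k + i) \<le> exp (- t)"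
    by (rule exp_decay_of_recursion[where M = M]) (use recursion D k i M in auto)
  then show ?thesis using M unfolding v_def by simp
qed

lemma mean_product_deviation:
  fixes \<nu> F G :: "nat \<Rightarrow> real"
  assumes \<nu>: "prob_measure_on N \<nu>"
    and F: "(\<Sum>w\<in>{0..N}. \<nu> w * F w) = 1" and G: "(\<Sum>w\<in>{0..N}. \<nu> w * G w) = 1"
  shows "\<bar>(\<Sum>w\<in>{0..N}. \<nu> w * F w * G w) - 1\<bar> \<le> ((sq_norm N \<nu> F - 1) + (sq_norm N \<nu> G - 1)) / 2"
proof -
  have \<nu>_nonneg: "w \<in> {0..N} \<Longrightarrow> \<nu> w \<ge> 0" for w
    using \<nu> unfolding prob_measure_on_def by simp
  have "(\<Sum>w\<in>{0..N}. \<nu> w * ((F w - 1) * (G w - 1)))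
      = (\<Sum>w\<in>{0..N}. \<nu> w * F w * G w - \<nu> w * F w - \<nu> w * G w + \<nu> w)"
    by (rule sum.cong) (auto simp: algebra_simps)
  also have "\<dots> = (\<Sum>w\<in>{0..N}. \<nu> w * F w * G w) - 1"
    using F G \<nu> by (simp add: prob_measure_on_def sum.distrib sum_subtractf)
  finally have "\<bar>(\<Sum>w\<in>{0..N}. \<nu> w * F w * G w) - 1\<bar> = \<bar>\<Sum>w\<in>{0..N}. \<nu> w * ((F w - 1) * (G w - 1))\<bar>"
    by simp
  also have "\<dots> \<le> (\<Sum>w\<in>{0..N}. \<bar>\<nu> w * ((F w - 1) * (G w - 1))\<bar>)"
    by (rule sum_abs)
  also have "\<dots> \<le> (\<Sum>w\<in>{0..N}. (\<nu> w * (F w - 1)^2 + \<nu> w * (G w - 1)^2) / 2)"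
  proof (rule sum_mono)
    fix w assume w: "w \<in> {0..N}"
    have "\<bar>(F w - 1) * (G w - 1)\<bar> \<le> ((F w - 1)^2 + (G w - 1)^2) / 2"
      using zero_le_power2[of "\<bar>F w - 1\<bar> - \<bar>G w - 1\<bar>"]
      unfolding abs_mult by (simp add: power2_eq_square algebra_simps)
    then have "\<nu> w * \<bar>(F w - 1) * (G w - 1)\<bar> \<le> \<nu> w * (((F w - 1)^2 + (G w - 1)^2) / 2)"
      by (rule mult_left_mono) (use \<nu>_nonneg[OF w] in simp)
    then show "\<bar>\<nu> w * ((F w - 1) * (G w - 1))\<bar> \<le> (\<nu> w * (F w - 1)^2 + \<nu> w * (G w - 1)^2) / 2"
      using \<nu>_nonneg[OF w] by (simp add: abs_mult distrib_left add_divide_distrib)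
  qed
  also have "\<dots> = ((sq_norm N \<nu> F - 1) + (sq_norm N \<nu> G - 1)) / 2"
    by (simp add: sum.distrib sum_divide_distrib[symmetric] sq_norm_minus_one[OF \<nu> F] sq_norm_minus_one[OF \<nu> G])
  finally show ?thesis .
qed

lemma ratio_close_if_near_common:
  fixes a b m eps :: real
  assumes m: "m > 0" and eps: "0 < eps" "eps < 1"
    and a: "\<bar>a / m - 1\<bar> \<le> eps / 4" and b: "\<bar>b / m - 1\<bar> \<le> eps / 4"
  shows "ratio_close a b eps"
proof -
  have rb: "3/4 \<le> b / m" using b eps by linarith
  then have "b \<noteq> 0" by auto
  have "\<bar>a / b - 1\<bar> = \<bar>a / m - b / m\<bar> / (b / m)"
    using m rb by (simp add: field_simps)
  also have "\<dots> \<le> (eps / 2) / (3/4)"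
  proof (rule frac_le)
    show "\<bar>a / m - b / m\<bar> \<le> eps / 2" using a b by linarith
  qed (use rb eps in auto)
  also have "\<dots> < eps" using eps by simp
  finally show ?thesis unfolding ratio_close_def using \<open>b \<noteq> 0\<close> by simp
qed

section \<open>Products of kernels\<close>

lemma kmul_assoc: "kmul N (kmul N A B) C = kmul N A (kmul N B C)"
  unfolding kmul_def
  by (auto simp: sum_distrib_left sum_distrib_right mult.assoc intro!: ext sum.swap)

lemma kmul_id_right: "y \<le> N \<Longrightarrow> kmul N A (\<lambda>x y. if x = y then 1 else 0) x y = A x y"
  unfolding kmul_def by (simp add: if_distrib cong: if_cong)

text \<open>\<open>kback N K n j\<close> is \<open>K_{n-j,n} = K_{n-j+1} \<cdots> K_n\<close>.\<close>
fun kback :: "nat \<Rightarrow> (nat \<Rightarrow> nat \<Rightarrow> nat \<Rightarrow> real) \<Rightarrow> nat \<Rightarrow> nat \<Rightarrow> (nat \<Rightarrow> nat \<Rightarrow> real)" where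
  "kback N K n 0 = (\<lambda>x y. if x = y then 1 else 0)"
| "kback N K n (Suc j) = kmul N (K (n - j)) (kback N K n j)"

lemma kprod_split:
  assumes "j \<le> n" "y \<le> N"
  shows "kprod N K n x y = kmul N (kprod N K (n - j)) (kback N K n j) x y"
  using assms
proof (induction j arbitrary: x y)
  case 0
  then show ?case by (simp add: kmul_id_right)
next
  case (Suc j)
  have "n - j = Suc (n - Suc j)" using Suc.prems by simp
  then have "kmul N (kprod N K (n - j)) (kback N K n j) = kmul N (kprod N K (n - Suc j)) (kback N K n (Suc j))"
    by (simp add: kmul_assoc)
  then show ?case using Suc by (metis Suc_leD)
qed

lemma markov_kernel_kmul:
  assumes P: "markov_kernel N P" and Q: "markov_kernel N Q"
  shows "markov_kernel N (kmul N P Q)"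
  unfolding markov_kernel_def
proof (intro conjI ballI)
  fix x y assume "x \<in> {0..N}" "y \<in> {0..N}"
  then show "kmul N P Q x y \<ge> 0"
    using P Q unfolding markov_kernel_def kmul_def by (auto intro!: sum_nonneg)
next
  fix x assume x: "x \<in> {0..N}"
  have "(\<Sum>y\<in>{0..N}. kmul N P Q x y) = (\<Sum>z\<in>{0..N}. P x z * (\<Sum>y\<in>{0..N}. Q z y))"
    unfolding kmul_def sum_distrib_left by (rule sum.swap)
  also have "\<dots> = 1" using P Q x unfolding markov_kernel_def by simp
  finally show "(\<Sum>y\<in>{0..N}. kmul N P Q x y) = 1" .
qed

lemma markov_kernel_id: "markov_kernel N (\<lambda>x y. if x = y then 1 else 0)"
  unfolding markov_kernel_def by simp

lemma markov_kernel_kprod: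
  "(\<And>i. 1 \<le> i \<Longrightarrow> markov_kernel N (K i)) \<Longrightarrow> markov_kernel N (kprod N K n)"
  by (induction n) (simp_all add: markov_kernel_kmul markov_kernel_id)

lemma markov_kernel_kback:
  "(\<And>i. 1 \<le> i \<Longrightarrow> markov_kernel N (K i)) \<Longrightarrow> j \<le> n \<Longrightarrow> markov_kernel N (kback N K n j)"
  by (induction j) (simp_all add: markov_kernel_kmul markov_kernel_id)

section \<open>Stable sequences of lazy birth and death kernels\<close>

definition mu :: "nat \<Rightarrow> (nat \<Rightarrow> nat \<Rightarrow> nat \<Rightarrow> real) \<Rightarrow> nat \<Rightarrow> nat \<Rightarrow> real" where
  "mu N K k w = (\<Sum>y\<in>{0..N}. uniform N y * kprod N K k y w)"

locale lazy_stable_chain =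
  fixes N :: nat and K :: "nat \<Rightarrow> nat \<Rightarrow> nat \<Rightarrow> real" and c :: real
  assumes N_pos: "N \<ge> 1" and c: "c \<ge> 1"
    and markov: "\<And>i. 1 \<le> i \<Longrightarrow> markov_kernel N (K i)"
    and stay: "\<And>i v. 1 \<le> i \<Longrightarrow> v \<le> N \<Longrightarrow> K i v v \<ge> 1/4"
    and up: "\<And>i v. 1 \<le> i \<Longrightarrow> v < N \<Longrightarrow> K i v (Suc v) \<ge> 1/4"
    and down: "\<And>i v. 1 \<le> i \<Longrightarrow> v < N \<Longrightarrow> K i (Suc v) v \<ge> 1/4"
    and stable: "\<And>n w. w \<le> N \<Longrightarrow> 1 / (c * (N+1)) \<le> mu N K n w \<and> mu N K n w \<le> c / (N+1)"
begin

abbreviation "m \<equiv> mu N K"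

lemma K_nonneg: "1 \<le> i \<Longrightarrow> x \<le> N \<Longrightarrow> y \<le> N \<Longrightarrow> K i x y \<ge> 0"
  using markov unfolding markov_kernel_def by auto

lemma K_row_sum: "1 \<le> i \<Longrightarrow> x \<le> N \<Longrightarrow> (\<Sum>y\<in>{0..N}. K i x y) = 1"
  using markov unfolding markov_kernel_def by auto

lemma kprod_nonneg: "x \<le> N \<Longrightarrow> y \<le> N \<Longrightarrow> kprod N K k x y \<ge> 0"
  using markov_kernel_kprod[OF markov] unfolding markov_kernel_def by auto

lemma mu_pos: "w \<le> N \<Longrightarrow> m k w > 0"
proof -
  assume "w \<le> N"
  moreover have "1 / (c * (N+1)) > 0" using c by simp
  ultimately show ?thesis using stable[of w k] by linarith
qed

lemma mu_nonzero [simp]: "w \<le> N \<Longrightarrow> m k w \<noteq> 0"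
  using mu_pos[of w k] by simp

lemma mu_Suc: "m (Suc k) w' = (\<Sum>w\<in>{0..N}. m k w * K (Suc k) w w')"
proof -
  have "m (Suc k) w' = (\<Sum>y\<in>{0..N}. \<Sum>w\<in>{0..N}. uniform N y * kprod N K k y w * K (Suc k) w w')"
    by (simp add: mu_def kmul_def sum_distrib_left mult.assoc)
  also have "\<dots> = (\<Sum>w\<in>{0..N}. m k w * K (Suc k) w w')"
    by (subst sum.swap) (simp add: mu_def sum_distrib_right)
  finally show ?thesis .
qed

lemma prob_measure_mu: "prob_measure_on N (m k)"
proof -
  have "(\<Sum>w\<in>{0..N}. m k w) = (\<Sum>y\<in>{0..N}. uniform N y * (\<Sum>w\<in>{0..N}. kprod N K k y w))"
    unfolding mu_def sum_distrib_left by (rule sum.swap)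
  also have "\<dots> = 1"
    using markov_kernel_kprod[OF markov] by (simp add: markov_kernel_def uniform_def)
  finally show ?thesis using mu_pos unfolding prob_measure_on_def by (auto intro: less_imp_le)
qed

text \<open>\<open>kappa\<close> bounds \<open>\<rho>(v) P(v,v) P(v,v+1)\<close> from below both for the backward steps
  (\<open>\<rho> = \<mu>_k\<close>, \<open>P = K\<close>, where \<open>1 / (16 c (N+1))\<close> would do) and for the forward steps, which
  run the time reversal \<open>P(w',w) = \<mu>_k(w) K(w,w') / \<mu>_{k+1}(w')\<close> and lose a further
  factor \<open>c\<^sup>2\<close>.\<close>
definition kappa :: real where "kappa = 1 / (16 * c^3 * (N+1))"

lemma kappa_pos: "kappa > 0"
  using c by (simp add: kappa_def)

definition fwd :: "nat \<Rightarrow> nat \<Rightarrow> nat \<Rightarrow> real" where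
  "fwd x k w = kprod N K k x w / m k w"

definition reversal :: "nat \<Rightarrow> nat \<Rightarrow> nat \<Rightarrow> real" where
  "reversal k w' w = m k w * K (Suc k) w w' / m (Suc k) w'"

lemma fwd_nonneg: "x \<le> N \<Longrightarrow> w \<le> N \<Longrightarrow> fwd x k w \<ge> 0"
  using kprod_nonneg mu_pos[of w k] by (simp add: fwd_def)

lemma fwd_mean: "x \<le> N \<Longrightarrow> (\<Sum>w\<in>{0..N}. m k w * fwd x k w) = 1"
  using markov_kernel_kprod[OF markov] by (simp add: fwd_def markov_kernel_def)

lemma markov_kernel_reversal: "markov_kernel N (reversal k)"
  unfolding markov_kernel_def
proof (intro conjI ballI)
  fix w' w assume "w' \<in> {0..N}" "w \<in> {0..N}"
  then show "reversal k w' w \<ge> 0"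
    unfolding reversal_def using mu_pos K_nonneg[of "Suc k" w w'] by (simp add: less_imp_le)
next
  fix w' assume "w' \<in> {0..N}"
  then show "(\<Sum>w\<in>{0..N}. reversal k w' w) = 1"
    using mu_pos[of w' "Suc k"] by (simp add: reversal_def sum_divide_distrib[symmetric] mu_Suc[symmetric])
qed

lemma reversal_fwd: "(\<Sum>w\<in>{0..N}. reversal k w' w * fwd x k w) = fwd x (Suc k) w'"
proof -
  have "(\<Sum>w\<in>{0..N}. reversal k w' w * fwd x k w)
      = (\<Sum>w\<in>{0..N}. kprod N K k x w * K (Suc k) w w') / m (Suc k) w'"
    unfolding sum_divide_distrib by (rule sum.cong) (use mu_pos in \<open>auto simp: reversal_def fwd_def\<close>)
  then show ?thesis by (simp add: fwd_def kmul_def)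
qed

lemma mu_reversal: "w \<le> N \<Longrightarrow> (\<Sum>w'\<in>{0..N}. m (Suc k) w' * reversal k w' w) = m k w"
proof -
  assume w: "w \<le> N"
  have "(\<Sum>w'\<in>{0..N}. m (Suc k) w' * reversal k w' w) = (\<Sum>w'\<in>{0..N}. m k w * K (Suc k) w w')"
    by (rule sum.cong) (use mu_pos in \<open>auto simp: reversal_def\<close>)
  then show ?thesis using K_row_sum[of "Suc k" w] w by (simp add: sum_distrib_left[symmetric])
qed

lemma kappa_le_reversal:
  assumes v: "v < N"
  shows "kappa \<le> m (Suc k) v * reversal k v v * reversal k v (Suc v)"
proof -
  define L where "L = 1 / (c * (N+1))"
  have L: "L > 0" "L \<le> m k v" "L \<le> m k (Suc v)"
    using c stable[of v k] stable[of "Suc v" k] v unfolding L_def by auto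
  have "(L * (1/4)) * (L * (1/4)) \<le> (m k v * K (Suc k) v v) * (m k (Suc v) * K (Suc k) (Suc v) v)"
    using L stay[of "Suc k" v] down[of "Suc k" v] v by (intro mult_mono) auto
  moreover have "0 < m (Suc k) v" "m (Suc k) v \<le> c / (N+1)"
    using mu_pos stable v by auto
  ultimately have "(L * (1/4)) * (L * (1/4)) / (c / (N+1))
      \<le> (m k v * K (Suc k) v v) * (m k (Suc v) * K (Suc k) (Suc v) v) / m (Suc k) v"
    using L c mu_pos[of v k] mu_pos[of "Suc v" k] K_nonneg[of "Suc k" v v] K_nonneg[of "Suc k" "Suc v" v] v
    by (intro frac_le) auto
  also have "\<dots> = m (Suc k) v * reversal k v v * reversal k v (Suc v)"
    using mu_pos[of v "Suc k"] v by (simp add: reversal_def power2_eq_square field_simps)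
  also have "(L * (1/4)) * (L * (1/4)) / (c / (N+1)) = kappa"
  proof -
    have "((1 / (c * r)) * (1/4)) * ((1 / (c * r)) * (1/4)) / (c / r) = 1 / (16 * c^3 * r)"
      if "r > 0" for r :: real
      using that c by (simp add: field_simps power3_eq_cube)
    from this[of "real N + 1"] show ?thesis unfolding L_def kappa_def by simp
  qed
  finally show ?thesis .
qed

lemma fwd_step:
  "sq_norm N (m (Suc k)) (fwd x (Suc k)) + kappa * path_energy N (fwd x k) \<le> sq_norm N (m k) (fwd x k)"
proof -
  have "sq_norm N (m (Suc k)) (\<lambda>w'. \<Sum>w\<in>{0..N}. reversal k w' w * fwd x k w) + kappa * path_energy N (fwd x k)
      \<le> sq_norm N (\<lambda>w. \<Sum>w'\<in>{0..N}. m (Suc k) w' * reversal k w' w) (fwd x k)"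
    by (rule markov_step_sq_norm_gap[OF markov_kernel_reversal])
      (use mu_pos kappa_le_reversal in \<open>auto simp: less_imp_le mult.assoc\<close>)
  moreover have "sq_norm N (m (Suc k)) (\<lambda>w'. \<Sum>w\<in>{0..N}. reversal k w' w * fwd x k w)
      = sq_norm N (m (Suc k)) (fwd x (Suc k))"
    by (rule sq_norm_cong) (simp_all add: reversal_fwd)
  moreover have "sq_norm N (\<lambda>w. \<Sum>w'\<in>{0..N}. m (Suc k) w' * reversal k w' w) (fwd x k)
      = sq_norm N (m k) (fwd x k)"
    by (rule sq_norm_cong) (simp_all add: mu_reversal)
  ultimately show ?thesis by simp
qed

lemma kappa_le_kernel:
  assumes i: "1 \<le> i" and v: "v < N"
  shows "kappa \<le> m k v * K i v v * K i v (Suc v)"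
proof -
  define L where "L = 1 / (c * (N+1))"
  have L: "0 < L" "L \<le> m k v" using c stable[of v k] v unfolding L_def by auto
  have "L * (1/4) * (1/4) \<le> m k v * K i v v * K i v (Suc v)"
    using L stay[OF i, of v] up[OF i v] v by (intro mult_mono) auto
  moreover have "kappa \<le> L * (1/4) * (1/4)"
  proof -
    have "1 * c \<le> c^2 * c" using c by (intro mult_right_mono) (auto simp: one_le_power)
    then have "c \<le> c^3" by (simp add: power3_eq_cube power2_eq_square)
    then have "1 / (16 * c^3 * (N+1)) \<le> 1 / (16 * c * (N+1))"
      using c by (intro divide_left_mono) auto
    then show ?thesis unfolding kappa_def L_def by simp
  qed
  ultimately show ?thesis by linarith
qed

definition bwd :: "nat \<Rightarrow> nat \<Rightarrow> nat \<Rightarrow> nat \<Rightarrow> real" where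
  "bwd n z j w = kback N K n j w z / m n z"

lemma bwd_nonneg: "j \<le> n \<Longrightarrow> z \<le> N \<Longrightarrow> w \<le> N \<Longrightarrow> bwd n z j w \<ge> 0"
  using markov_kernel_kback[OF markov, where j = j and n = n] mu_pos[of z n] unfolding bwd_def markov_kernel_def by simp

lemma mu_kback:
  assumes j: "j \<le> n" and z: "z \<le> N"
  shows "(\<Sum>w\<in>{0..N}. m (n - j) w * kback N K n j w z) = m n z"
proof -
  have "(\<Sum>w\<in>{0..N}. m (n - j) w * kback N K n j w z)
      = (\<Sum>w\<in>{0..N}. \<Sum>y\<in>{0..N}. uniform N y * (kprod N K (n - j) y w * kback N K n j w z))"
    by (simp add: mu_def sum_distrib_right mult.assoc)
  also have "\<dots> = (\<Sum>y\<in>{0..N}. uniform N y * (\<Sum>w\<in>{0..N}. kprod N K (n - j) y w * kback N K n j w z))"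
    by (subst sum.swap) (simp add: sum_distrib_left)
  also have "\<dots> = m n z"
    using kprod_split[OF j z] by (simp add: mu_def kmul_def)
  finally show ?thesis .
qed

lemma bwd_mean: "j \<le> n \<Longrightarrow> z \<le> N \<Longrightarrow> (\<Sum>w\<in>{0..N}. m (n - j) w * bwd n z j w) = 1"
  using mu_kback[of j n z] by (simp add: bwd_def sum_divide_distrib[symmetric] mult.assoc)

lemma bwd_Suc: "bwd n z (Suc j) w = (\<Sum>w'\<in>{0..N}. K (n - j) w w' * bwd n z j w')"
  by (simp add: bwd_def kmul_def sum_divide_distrib mult.assoc)

lemma bwd_step:
  assumes j: "j < n"
  shows "sq_norm N (m (n - Suc j)) (bwd n z (Suc j)) + kappa * path_energy N (bwd n z j)
       \<le> sq_norm N (m (n - j)) (bwd n z j)"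
proof -
  have n_j: "Suc (n - Suc j) = n - j" "1 \<le> n - j" using j by auto
  have "sq_norm N (m (n - Suc j)) (\<lambda>w. \<Sum>w'\<in>{0..N}. K (n - j) w w' * bwd n z j w') + kappa * path_energy N (bwd n z j)
      \<le> sq_norm N (\<lambda>w'. \<Sum>w\<in>{0..N}. m (n - Suc j) w * K (n - j) w w') (bwd n z j)"
    by (rule markov_step_sq_norm_gap[OF markov[OF n_j(2)]])
      (use mu_pos kappa_le_kernel[OF n_j(2)] in \<open>auto simp: less_imp_le\<close>)
  moreover have "(\<lambda>w'. \<Sum>w\<in>{0..N}. m (n - Suc j) w * K (n - j) w w') = m (n - j)"
    using mu_Suc[of "n - Suc j"] n_j by auto
  ultimately show ?thesis by (simp add: bwd_Suc[symmetric])
qed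

definition relax_time :: real where "relax_time = 4 * real N / kappa"

definition half_time :: "real \<Rightarrow> nat" where
  "half_time eps = nat \<lceil>relax_time\<rceil> + nat \<lceil>relax_time * ln (4 / eps)\<rceil>"

lemma relax_time_eq: "relax_time = 64 * c^3 * real N * (real N + 1)"
  unfolding relax_time_def kappa_def using c by (simp add: field_simps)

lemma one_le_relax_time: "1 \<le> relax_time"
proof -
  have "1 * 1 \<le> real N * (real N + 1)" using N_pos by (intro mult_mono) auto
  then have "1 * 1 \<le> c^3 * (real N * (real N + 1))"
    using c by (intro mult_mono) (auto simp: one_le_power)
  then show ?thesis unfolding relax_time_eq by (simp add: mult.assoc)
qed

lemma sq_norm_after_half_time:
  fixes \<nu> F :: "nat \<Rightarrow> nat \<Rightarrow> real"
  assumes eps: "0 < eps" "eps < 1"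
    and \<nu>: "\<And>k. k \<le> half_time eps \<Longrightarrow> prob_measure_on N (\<nu> k)"
    and F_nonneg: "\<And>k w. k \<le> half_time eps \<Longrightarrow> w \<le> N \<Longrightarrow> F k w \<ge> 0"
    and mean: "\<And>k. k \<le> half_time eps \<Longrightarrow> (\<Sum>w\<in>{0..N}. \<nu> k w * F k w) = 1"
    and step: "\<And>k. k < half_time eps \<Longrightarrow>
      sq_norm N (\<nu> (Suc k)) (F (Suc k)) + kappa * path_energy N (F k) \<le> sq_norm N (\<nu> k) (F k)"
  shows "sq_norm N (\<nu> (half_time eps)) (F (half_time eps)) - 1 \<le> eps / 4"
proof -
  have "1 \<le> \<lceil>relax_time\<rceil>" using one_le_relax_time by linarith
  then have k: "1 \<le> nat \<lceil>relax_time\<rceil>" "relax_time \<le> real (nat \<lceil>relax_time\<rceil>)"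
    by (auto simp: of_nat_ceiling le_nat_iff)
  have i: "relax_time * ln (4 / eps) \<le> real (nat \<lceil>relax_time * ln (4 / eps)\<rceil>)"
    by (simp add: of_nat_ceiling)
  have "sq_norm N (\<nu> (half_time eps)) (F (half_time eps)) - 1 \<le> exp (- ln (4 / eps))"
  proof (rule sq_norm_decay[where D = relax_time and k = "nat \<lceil>relax_time\<rceil>" and i = "nat \<lceil>relax_time * ln (4 / eps)\<rceil>"])
    show "relax_time = 4 * real N / kappa" by (rule relax_time_def)
    show "nat \<lceil>relax_time\<rceil> + nat \<lceil>relax_time * ln (4 / eps)\<rceil> = half_time eps" by (simp add: half_time_def)
  qed (fact kappa_pos \<nu> F_nonneg mean step one_le_relax_time k i)+
  also have "exp (- ln (4 / eps)) = eps / 4" using eps by (simp add: exp_minus)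
  finally show ?thesis .
qed

lemma kprod_over_mu_close:
  assumes eps: "0 < eps" "eps < 1" and x: "x \<le> N" and z: "z \<le> N"
  shows "\<bar>kprod N K (2 * half_time eps) x z / m (2 * half_time eps) z - 1\<bar> \<le> eps / 4"
proof -
  define L where "L = half_time eps"
  define n where "n = 2 * L"
  have n_L: "n - L = L" unfolding n_def by simp
  have fwd_close: "sq_norm N (m L) (fwd x L) - 1 \<le> eps / 4"
    unfolding L_def using prob_measure_mu fwd_nonneg[OF x] fwd_mean[OF x] fwd_step
    by (intro sq_norm_after_half_time[OF eps]) auto
  have bwd_close: "sq_norm N (m (n - L)) (bwd n z L) - 1 \<le> eps / 4"
    unfolding L_def using prob_measure_mu bwd_nonneg[OF _ z] bwd_mean[OF _ z] bwd_step
    by (intro sq_norm_after_half_time[OF eps, where \<nu> = "\<lambda>j. m (n - j)" and F = "bwd n z"])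
      (auto simp: n_def L_def)
  have "(\<Sum>w\<in>{0..N}. m L w * fwd x L w * bwd n z L w)
      = (\<Sum>w\<in>{0..N}. kprod N K L x w * kback N K n L w z) / m n z"
    unfolding sum_divide_distrib by (rule sum.cong) (auto simp: fwd_def bwd_def)
  also have "\<dots> = kprod N K n x z / m n z"
    using kprod_split[of L n z N K x] z n_L by (simp add: kmul_def n_def)
  finally have "\<bar>kprod N K n x z / m n z - 1\<bar>
      \<le> ((sq_norm N (m L) (fwd x L) - 1) + (sq_norm N (m L) (bwd n z L) - 1)) / 2"
    using mean_product_deviation[OF prob_measure_mu fwd_mean[OF x] bwd_mean[of L n z]] z n_L
    by (simp add: n_def)
  then show ?thesis using fwd_close bwd_close n_L unfolding n_def L_def by simp
qed

lemma merged_at_twice_half_time: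
  assumes "0 < eps" "eps < 1"
  shows "merged N K eps (2 * half_time eps)"
  unfolding merged_def
  using ratio_close_if_near_common[OF mu_pos assms kprod_over_mu_close[OF assms] kprod_over_mu_close[OF assms]]
  by auto

lemma twice_half_time_le:
  assumes eps: "0 < eps" "eps < 1"
  shows "real (2 * half_time eps) \<le> 2000 * c^3 * real N ^ 2 * (1 + log_plus (1 / eps))"
proof -
  define l where "l = log_plus (1 / eps)"
  define C where "C = c^3 * real N ^ 2"
  have l: "l \<ge> 0" unfolding l_def log_plus_def by simp
  have "1 * 1 \<le> c^3 * real N ^ 2"
    by (rule mult_mono) (use c N_pos in \<open>auto simp: one_le_power\<close>)
  then have C: "C \<ge> 1" unfolding C_def by simp
  have "relax_time \<le> 64 * c^3 * real N * (2 * real N)"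
    unfolding relax_time_eq using c N_pos by (intro mult_left_mono) auto
  then have relax_time_le: "relax_time \<le> 128 * C" by (simp add: C_def power2_eq_square)
  have ln_bounds: "0 \<le> ln (4 / eps)" "ln (4 / eps) \<le> 3 + l"
  proof -
    show "0 \<le> ln (4 / eps)" using eps by simp
    have "ln (4 / eps) = ln 4 + ln (1 / eps)" using eps by (simp add: ln_div)
    moreover have "ln (4::real) \<le> 3" using ln_le_minus_one[of 4] by simp
    moreover have "ln (1 / eps) \<le> l" unfolding l_def log_plus_def by simp
    ultimately show "ln (4 / eps) \<le> 3 + l" by linarith
  qed
  have ceiling: "real (nat \<lceil>y\<rceil>) \<le> y + 1" if "0 \<le> y" for y :: real
    using that ceiling_correct[of y] by (simp add: of_nat_nat)
  have "real (half_time eps) \<le> (relax_time + 1) + (relax_time * ln (4 / eps) + 1)"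
    unfolding half_time_def of_nat_add using one_le_relax_time ln_bounds(1) by (intro add_mono ceiling) auto
  also have "\<dots> \<le> relax_time * (4 + l) + 2"
    using mult_left_mono[OF ln_bounds(2), of relax_time] one_le_relax_time by (simp add: algebra_simps)
  also have "\<dots> \<le> 128 * C * (4 + l) + 2 * C"
    using relax_time_le l C by (intro add_mono mult_right_mono) auto
  also have "\<dots> \<le> 1000 * (C * (1 + l))"
    using C l by (simp add: algebra_simps)
  finally show ?thesis unfolding C_def l_def by (simp add: mult_ac)
qed

end

lemma lazy_stable_chain_if_QN_stable:
  assumes c: "c \<ge> 1" and N: "N \<ge> 1"
    and QN: "\<forall>i\<ge>1. K i \<in> QN N" and stable: "c_stable N c K (uniform N)"
  shows "lazy_stable_chain N K c"
proof
  have band: "K i x y \<ge> 1/4" if "1 \<le> i" "x \<le> N" "y \<le> N" "\<bar>int x - int y\<bar> \<le> 1" for i x y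
    using QN that unfolding QN_def by auto
  show "K i v v \<ge> 1/4" if "1 \<le> i" "v \<le> N" for i v
    using band[of i v v] that by auto
  show "K i v (Suc v) \<ge> 1/4" "K i (Suc v) v \<ge> 1/4" if "1 \<le> i" "v < N" for i v
    using band[of i v "Suc v"] band[of i "Suc v" v] that by auto
  show "markov_kernel N (K i)" if "1 \<le> i" for i
    using QN that unfolding QN_def birth_death_def by auto
  show "1 / (c * (N+1)) \<le> mu N K n w \<and> mu N K n w \<le> c / (N+1)" if "w \<le> N" for n w
  proof -
    have "1/c \<le> mu N K n w * (N+1)" "mu N K n w * (N+1) \<le> c"
      using stable that unfolding c_stable_def mu_def Let_def uniform_def by auto
    then show ?thesis using c by (simp add: divide_le_eq le_divide_eq mult_ac)
  qed
qed (use c N in auto)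

lemma T_inf_le_if_merged: "merged N K eps n \<Longrightarrow> T_inf N K eps \<le> enat n"
  unfolding T_inf_def by (intro Inf_lower) auto

theorem theorem1p14:
  fixes c :: real
  assumes "c \<ge> 1"
  shows "\<exists>A::real. 0 < A \<and>
    (\<forall>(N::nat) (K :: nat \<Rightarrow> nat \<Rightarrow> nat \<Rightarrow> real).
       (\<forall>i\<ge>1. K i \<in> QN N) \<longrightarrow> c_stable N c K (uniform N) \<longrightarrow>
       (\<forall>eps::real. 0 < eps \<and> eps < 1 \<longrightarrow>
          T_inf N K eps \<le> enat (nat \<lfloor>A * real N ^ 2 * (1 + log_plus (1 / eps))\<rfloor>)))"
proof (intro exI[of _ "2000 * c^3"] conjI allI impI)
  show "0 < 2000 * c^3" using assms by simp
  fix N :: nat and K :: "nat \<Rightarrow> nat \<Rightarrow> nat \<Rightarrow> real" and eps :: real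
  assume QN: "\<forall>i\<ge>1. K i \<in> QN N" and stable: "c_stable N c K (uniform N)" and eps: "0 < eps \<and> eps < 1"
  show "T_inf N K eps \<le> enat (nat \<lfloor>2000 * c^3 * real N ^ 2 * (1 + log_plus (1 / eps))\<rfloor>)"
  proof (cases "N = 0")
    case True
    then have "merged N K eps 0" using eps unfolding merged_def ratio_close_def by simp
    then show ?thesis using T_inf_le_if_merged order_trans zero_enat_def by fastforce
  next
    case False
    then interpret lazy_stable_chain N K c
      using lazy_stable_chain_if_QN_stable[OF assms _ QN stable] by simp
    have "T_inf N K eps \<le> enat (2 * half_time eps)"
      using T_inf_le_if_merged merged_at_twice_half_time eps by blast
    also have "2 * half_time eps \<le> nat \<lfloor>2000 * c^3 * real N ^ 2 * (1 + log_plus (1 / eps))\<rfloor>"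
      using twice_half_time_le eps by (intro le_nat_floor) auto
    finally show ?thesis by simp
  qed
qed

end
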